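(* Let $D$ be the dihedral group of order 8, let $\lambda_1,\lambda_2:D\to\mathbb Z/2\mathbb Z$ be homomorphisms each with kernel isomorphic to $\mathbb Z/2\times\mathbb Z/2$, and let $D\curlywedge D=\{(u,v)\in D\times D:\lambda_1(u)=\lambda_2(v)\}$. Then $D\curlywedge D$ contains a unique abelian subgroup of order 16; this subgroup equals $\ker(\lambda_1)\times\ker(\lambda_2)$ and is isomorphic to $(\mathbb Z/2\mathbb Z)^4$. *)

theory Defs
  imports "HOL-Algebra.Algebra"
begin

text \<open>The dihedral group of order 8, realised concretely: the pair (a,s) stands for
  r^a f^s with r a rotation of order 4 and f a reflection, f r f = r^-1.\<close>
definition dihedral8 :: "(int \<times> int) monoid" where
  "dihedral8 = \<lparr>carrier = {0..<4} \<times> {0..<2},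
     monoid.mult = (\<lambda>(a, s) (b, t). ((a + (if s = 0 then b else - b)) mod 4, (s + t) mod 2)),
     one = (0, 0)\<rparr>"

definition fibre_prod :: "('a, 'm) monoid_scheme \<Rightarrow> ('a \<Rightarrow> 'b) \<Rightarrow> ('a \<Rightarrow> 'b) \<Rightarrow> ('a \<times> 'a) monoid" where
  "fibre_prod D l1 l2 = (DirProd D D)\<lparr>carrier := {(u, v). u \<in> carrier D \<and> v \<in> carrier D \<and> l1 u = l2 v}\<rparr>"

end

theory Submission
  imports Defs
begin

text \<open>A homomorphism \<lambda> : D \<rightarrow> Z/2 whose kernel has exponent 2 cannot kill the rotation r of
  order 4, so \<lambda>(r^a f^s) = a + b s mod 2 for some b. Every element of D outside the kernel K
  of such a character has a centraliser of order 4 meeting each coset of K in two elements.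
  Hence if an abelian subgroup H of the fibre product contained a pair (u, v) outside K1 \<times> K2,
  all of H would commute with (u, v) and so lie in a set of at most 2 \<cdot> 2 + 2 \<cdot> 2 = 8 pairs.\<close>

lemma comm_group_DirProd:
  assumes "comm_group G" and "comm_group H"
  shows "comm_group (G \<times>\<times> H)"
proof -
  interpret G: comm_group G by fact
  interpret H: comm_group H by fact
  have "group (G \<times>\<times> H)"
    by (simp add: DirProd_group G.group_axioms H.group_axioms)
  then show ?thesis
    by (rule group.group_comm_groupI) (auto simp: G.m_comm H.m_comm)
qed

lemma square_eq_one_if_iso:
  assumes "group G" and "group H" and "G \<cong> H"
    and "\<And>y. y \<in> carrier H \<Longrightarrow> y \<otimes>\<^bsub>H\<^esub> y = \<one>\<^bsub>H\<^esub>"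
    and "x \<in> carrier G"
  shows "x \<otimes>\<^bsub>G\<^esub> x = \<one>\<^bsub>G\<^esub>"
proof -
  obtain f where f: "f \<in> iso G H"
    using assms(3) by (auto simp: is_iso_def)
  interpret group_hom G H f
    using f assms(1,2) by (simp add: group_hom_def group_hom_axioms_def iso_def)
  have "f (x \<otimes>\<^bsub>G\<^esub> x) = f \<one>\<^bsub>G\<^esub>"
    using assms(4,5) by simp
  then show ?thesis
    using f assms(5) by (auto simp: iso_def bij_betw_def inj_on_def)
qed

lemma square_eq_one_DirProd_integer_mod_group_2:
  assumes "y \<in> carrier (integer_mod_group 2 \<times>\<times> integer_mod_group 2)"
  shows "y \<otimes>\<^bsub>integer_mod_group 2 \<times>\<times> integer_mod_group 2\<^esub> y
    = \<one>\<^bsub>integer_mod_group 2 \<times>\<times> integer_mod_group 2\<^esub>"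
  using assms by (auto simp: mult_DirProd' carrier_integer_mod_group)

lemma subgroup_fibre_prod:
  assumes "group D" and "group G" and "l1 \<in> hom D G" and "l2 \<in> hom D G"
  shows "subgroup (carrier (fibre_prod D l1 l2)) (D \<times>\<times> D)"
proof -
  interpret D: group D by fact
  interpret h1: group_hom D G l1
    using assms by (simp add: group_hom_def group_hom_axioms_def)
  interpret h2: group_hom D G l2
    using assms by (simp add: group_hom_def group_hom_axioms_def)
  show ?thesis
    by (rule group.subgroupI[OF DirProd_group[OF assms(1,1)]])
      (auto simp: fibre_prod_def h1.hom_mult h2.hom_mult intro!: exI[of _ "\<one>\<^bsub>D\<^esub>"])
qed

lemma group_fibre_prod:
  assumes "group D" and "group G" and "l1 \<in> hom D G" and "l2 \<in> hom D G"
  shows "group (fibre_prod D l1 l2)"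
  using subgroup.subgroup_is_group[OF subgroup_fibre_prod[OF assms] DirProd_group[OF assms(1,1)]]
  by (simp add: fibre_prod_def)

lemma kernels_subgroup_fibre_prod:
  assumes "group D" and "group G" and "l1 \<in> hom D G" and "l2 \<in> hom D G"
  shows "subgroup (kernel D G l1 \<times> kernel D G l2) (fibre_prod D l1 l2)"
proof -
  have "subgroup (kernel D G l) D" if "l \<in> hom D G" for l
    using assms(1,2) that by (simp add: group_hom_def group_hom_axioms_def group_hom.subgroup_kernel)
  then have "subgroup (kernel D G l1 \<times> kernel D G l2) (D \<times>\<times> D)"
    using assms by (simp add: DirProd_subgroups)
  moreover have "kernel D G l1 \<times> kernel D G l2 \<subseteq> carrier (fibre_prod D l1 l2)"
    by (auto simp: kernel_def fibre_prod_def)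
  ultimately show ?thesis
    using group.subgroup_incl[OF DirProd_group[OF assms(1,1)]] subgroup_fibre_prod[OF assms]
    by (simp add: fibre_prod_def)
qed

lemma fibre_prod_carrier_Times:
  "(fibre_prod D l1 l2)\<lparr>carrier := A \<times> B\<rparr> = D\<lparr>carrier := A\<rparr> \<times>\<times> D\<lparr>carrier := B\<rparr>"
  by (simp add: fibre_prod_def DirProd_def)

lemma fibre_prod_kernels_iso:
  assumes "group D" and "group G" and "l1 \<in> hom D G"
    and "D\<lparr>carrier := kernel D G l1\<rparr> \<cong> A" and "D\<lparr>carrier := kernel D G l2\<rparr> \<cong> B"
  shows "(fibre_prod D l1 l2)\<lparr>carrier := kernel D G l1 \<times> kernel D G l2\<rparr> \<cong> A \<times>\<times> B"
proof -
  have "group (D\<lparr>carrier := kernel D G l1\<rparr>)"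
    using assms(1-3) by (simp add: group_hom_def group_hom_axioms_def group_hom.subgroup_kernel
        subgroup.subgroup_is_group)
  then show ?thesis
    unfolding fibre_prod_carrier_Times using assms(4,5) by (rule group.DirProd_iso_trans)
qed

lemma DirProd_assoc_iso:
  "(\<lambda>((x, y), z). (x, (y, z))) \<in> iso ((A \<times>\<times> B) \<times>\<times> C) (A \<times>\<times> (B \<times>\<times> C))"
  by (auto simp: iso_def hom_def inj_on_def bij_betw_def image_def)

lemma carrier_dihedral8:
  "carrier dihedral8 = {(0, 0), (1, 0), (2, 0), (3, 0), (0, 1), (1, 1), (2, 1), (3, 1)}"
proof -
  have "{0..<4::int} = {0, 1, 2, 3}" and "{0..<2::int} = {0, 1}"
    by auto
  then show ?thesis
    by (auto simp: dihedral8_def)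
qed

lemma mult_dihedral8 [simp]:
  "(a, s) \<otimes>\<^bsub>dihedral8\<^esub> (b, t) = ((a + (if s = 0 then b else - b)) mod 4, (s + t) mod 2)"
  by (simp add: dihedral8_def)

lemma one_dihedral8 [simp]: "\<one>\<^bsub>dihedral8\<^esub> = (0, 0)"
  by (simp add: dihedral8_def)

lemma group_dihedral8: "group dihedral8"
  by (rule groupI) (auto simp: carrier_dihedral8)

text \<open>With the pair (a, s) standing for r^a f^s, the character dihedral8_char b sends it to
  a + b s mod 2. For b = 0 and b = 1 its kernels are the two Klein four subgroups
  {1, r^2, f, r^2 f} and {1, r^2, r f, r^3 f}.\<close>

definition dihedral8_char :: "int \<Rightarrow> int \<times> int \<Rightarrow> int" where
  "dihedral8_char b x = (fst x + b * snd x) mod 2"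

lemma dihedral8_char_cases: "dihedral8_char b x = 0 \<or> dihedral8_char b x = 1"
  unfolding dihedral8_char_def by presburger

lemma finite_carrier_dihedral8: "finite (carrier dihedral8)"
  by (simp add: carrier_dihedral8)

lemma card_centralizer_char_fibre_le_2:
  assumes "b \<in> {0, 1}" and "u \<in> carrier dihedral8" and "dihedral8_char b u = 1"
  shows "card {a \<in> carrier dihedral8.
      a \<otimes>\<^bsub>dihedral8\<^esub> u = u \<otimes>\<^bsub>dihedral8\<^esub> a \<and> dihedral8_char b a = i} \<le> 2"
proof -
  define P where "P a \<longleftrightarrow> a \<otimes>\<^bsub>dihedral8\<^esub> u = u \<otimes>\<^bsub>dihedral8\<^esub> a \<and> dihedral8_char b a = i" for a
  define xs :: "(int \<times> int) list" where
    "xs = [(0, 0), (1, 0), (2, 0), (3, 0), (0, 1), (1, 1), (2, 1), (3, 1)]"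
  have "{a \<in> carrier dihedral8. P a} = set (filter P xs)"
    by (auto simp: xs_def carrier_dihedral8)
  moreover have "length (filter P xs) \<le> 2"
  proof -
    have "i = 0 \<or> i = 1 \<or> (\<forall>a. dihedral8_char b a \<noteq> i)"
      by (metis dihedral8_char_cases)
    then show ?thesis
      using assms unfolding carrier_dihedral8
      by (elim disjE insertE emptyE) (simp_all add: xs_def P_def dihedral8_char_def)
  qed
  ultimately show ?thesis
    unfolding P_def by (metis card_length order_trans)
qed

lemma hom_dihedral8_Z2_eq_char:
  assumes hom: "l \<in> hom dihedral8 (integer_mod_group 2)"
    and kernel_iso: "dihedral8\<lparr>carrier := kernel dihedral8 (integer_mod_group 2) l\<rparr>
      \<cong> integer_mod_group 2 \<times>\<times> integer_mod_group 2"
  shows "\<exists>b\<in>{0, 1}. \<forall>x\<in>carrier dihedral8. l x = dihedral8_char b x"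
proof -
  have square_ker: "x \<otimes>\<^bsub>dihedral8\<^esub> x = \<one>\<^bsub>dihedral8\<^esub>"
    if "x \<in> kernel dihedral8 (integer_mod_group 2) l" for x
  proof -
    have "group (dihedral8\<lparr>carrier := kernel dihedral8 (integer_mod_group 2) l\<rparr>)"
      using hom group_dihedral8 by (simp add: group_hom_def group_hom_axioms_def
          group_hom.subgroup_kernel subgroup.subgroup_is_group)
    then show ?thesis
      using square_eq_one_if_iso[OF _ _ kernel_iso] square_eq_one_DirProd_integer_mod_group_2 that
      by (simp add: DirProd_group)
  qed
  have l_mult: "l (x \<otimes>\<^bsub>dihedral8\<^esub> y) = (l x + l y) mod 2"
    if "x \<in> carrier dihedral8" and "y \<in> carrier dihedral8" for x y
    using hom that by (simp add: hom_def)
  have l_range: "l x \<in> {0, 1}" if "x \<in> carrier dihedral8" for x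
    using hom_in_carrier[OF hom that] by (auto simp: carrier_integer_mod_group)
  define p q where "p = l (1, 0)" and "q = l (0, 1)"
  have in_carrier: "(a, s) \<in> carrier dihedral8" if "a \<in> {0, 1, 2, 3}" and "s \<in> {0, 1}" for a s
    using that by (auto simp: carrier_dihedral8)
  have l00: "l (0, 0) = 0"
    using l_mult[of "(0, 0)" "(0, 0)"] l_range[of "(0, 0)"] by (auto simp: in_carrier)
  have l20: "l (2, 0) = 0"
    using l_mult[of "(1, 0)" "(1, 0)"] l_range[of "(1, 0)"] by (auto simp: in_carrier)
  have l30: "l (3, 0) = p"
    using l_mult[of "(2, 0)" "(1, 0)"] l_range[of "(1, 0)"] l20 by (auto simp: in_carrier p_def)
  have l_reflection: "l (a, 1) = (l (a, 0) + q) mod 2" if "a \<in> {0, 1, 2, 3}" for a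
    using l_mult[of "(a, 0)" "(0, 1)"] that by (auto simp: in_carrier q_def)
  have "p = 1"
  proof (rule ccontr)
    assume "p \<noteq> 1"
    then have "(1, 0) \<in> kernel dihedral8 (integer_mod_group 2) l"
      using l_range[of "(1, 0)"] by (auto simp: kernel_def in_carrier p_def)
    then show False
      using square_ker by fastforce
  qed
  moreover have q: "q \<in> {0, 1}"
    unfolding q_def by (rule l_range) (simp add: carrier_dihedral8)
  ultimately have "l x = dihedral8_char q x" if "x \<in> carrier dihedral8" for x
    using that l00 l20 l30 l_reflection[of 0] l_reflection[of 1] l_reflection[of 2] l_reflection[of 3]
    unfolding carrier_dihedral8 p_def
    by (elim insertE emptyE) (simp_all add: dihedral8_char_def q_def)
  with q show ?thesis
    by blast
qed

lemma commuting_fibre_subset_char_kernels: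
  assumes b1: "b1 \<in> {0, 1}" and b2: "b2 \<in> {0, 1}"
    and H_fibre: "H \<subseteq> {(u, v). u \<in> carrier dihedral8 \<and> v \<in> carrier dihedral8
      \<and> dihedral8_char b1 u = dihedral8_char b2 v}"
    and H_comm: "\<And>x y. x \<in> H \<Longrightarrow> y \<in> H \<Longrightarrow>
      x \<otimes>\<^bsub>dihedral8 \<times>\<times> dihedral8\<^esub> y = y \<otimes>\<^bsub>dihedral8 \<times>\<times> dihedral8\<^esub> x"
    and H_card: "8 < card H"
  shows "H \<subseteq> {x \<in> carrier dihedral8. dihedral8_char b1 x = 0}
    \<times> {x \<in> carrier dihedral8. dihedral8_char b2 x = 0}"
proof safe
  fix u v
  assume uv: "(u, v) \<in> H"
  define C where "C b w i = {a \<in> carrier dihedral8.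
    a \<otimes>\<^bsub>dihedral8\<^esub> w = w \<otimes>\<^bsub>dihedral8\<^esub> a \<and> dihedral8_char b a = i}" for b w i
  have u: "u \<in> carrier dihedral8" and v: "v \<in> carrier dihedral8"
    and uv_char: "dihedral8_char b1 u = dihedral8_char b2 v"
    using uv H_fibre by auto
  moreover have "dihedral8_char b1 u = 0"
  proof (rule ccontr)
    assume "dihedral8_char b1 u \<noteq> 0"
    then have u1: "dihedral8_char b1 u = 1" and v1: "dihedral8_char b2 v = 1"
      using uv_char dihedral8_char_cases by metis+
    have "H \<subseteq> C b1 u 0 \<times> C b2 v 0 \<union> C b1 u 1 \<times> C b2 v 1"
    proof (rule subrelI)
      fix a c
      assume ac: "(a, c) \<in> H"
      have "a \<otimes>\<^bsub>dihedral8\<^esub> u = u \<otimes>\<^bsub>dihedral8\<^esub> a" "c \<otimes>\<^bsub>dihedral8\<^esub> v = v \<otimes>\<^bsub>dihedral8\<^esub> c"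
        using H_comm[OF ac uv] by simp_all
      moreover have "a \<in> carrier dihedral8" "c \<in> carrier dihedral8"
        "dihedral8_char b1 a = dihedral8_char b2 c"
        using ac H_fibre by auto
      ultimately show "(a, c) \<in> C b1 u 0 \<times> C b2 v 0 \<union> C b1 u 1 \<times> C b2 v 1"
        using dihedral8_char_cases[of b1 a] by (auto simp: C_def)
    qed
    moreover have "finite (C b w i)" for b w i
      by (simp add: C_def finite_carrier_dihedral8)
    ultimately have "card H \<le> card (C b1 u 0 \<times> C b2 v 0 \<union> C b1 u 1 \<times> C b2 v 1)"
      by (intro card_mono) auto
    also have "\<dots> \<le> card (C b1 u 0) * card (C b2 v 0) + card (C b1 u 1) * card (C b2 v 1)"
      unfolding card_cartesian_product[symmetric] by (rule card_Un_le)
    also have "\<dots> \<le> 2 * 2 + 2 * 2"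
    proof -
      have "card (C b1 u i) \<le> 2" "card (C b2 v i) \<le> 2" for i
        unfolding C_def using card_centralizer_char_fibre_le_2 b1 b2 u v u1 v1 by simp_all
      then show ?thesis
        by (intro add_mono mult_le_mono)
    qed
    finally show False
      using H_card by simp
  qed
  ultimately show "u \<in> carrier dihedral8" "dihedral8_char b1 u = 0"
    "v \<in> carrier dihedral8" "dihedral8_char b2 v = 0"
    by simp_all
qed

lemma abelian_subgroup_fibre_prod_dihedral8_subset_kernels:
  fixes l1 l2 :: "int \<times> int \<Rightarrow> int"
  defines "Z2 \<equiv> integer_mod_group 2" and "P \<equiv> fibre_prod dihedral8 l1 l2"
  assumes l1: "l1 \<in> hom dihedral8 Z2" and l2: "l2 \<in> hom dihedral8 Z2"
    and kernel_iso1: "dihedral8\<lparr>carrier := kernel dihedral8 Z2 l1\<rparr> \<cong> Z2 \<times>\<times> Z2"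
    and kernel_iso2: "dihedral8\<lparr>carrier := kernel dihedral8 Z2 l2\<rparr> \<cong> Z2 \<times>\<times> Z2"
    and H: "subgroup H P" and H_comm: "comm_group (P\<lparr>carrier := H\<rparr>)" and H_card: "8 < card H"
  shows "H \<subseteq> kernel dihedral8 Z2 l1 \<times> kernel dihedral8 Z2 l2"
proof -
  obtain b1 where b1: "b1 \<in> {0, 1}" "\<forall>x\<in>carrier dihedral8. l1 x = dihedral8_char b1 x"
    using hom_dihedral8_Z2_eq_char l1 kernel_iso1 unfolding Z2_def by blast
  obtain b2 where b2: "b2 \<in> {0, 1}" "\<forall>x\<in>carrier dihedral8. l2 x = dihedral8_char b2 x"
    using hom_dihedral8_Z2_eq_char l2 kernel_iso2 unfolding Z2_def by blast
  have "H \<subseteq> {(u, v). u \<in> carrier dihedral8 \<and> v \<in> carrier dihedral8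
      \<and> dihedral8_char b1 u = dihedral8_char b2 v}"
    using subgroup.subset[OF H] b1 b2 by (auto simp: P_def fibre_prod_def)
  moreover have "x \<otimes>\<^bsub>dihedral8 \<times>\<times> dihedral8\<^esub> y = y \<otimes>\<^bsub>dihedral8 \<times>\<times> dihedral8\<^esub> x"
    if "x \<in> H" and "y \<in> H" for x y
    using comm_monoid.m_comm[OF comm_group.axioms(1)[OF H_comm]] that by (simp add: P_def fibre_prod_def)
  ultimately have "H \<subseteq> {x \<in> carrier dihedral8. dihedral8_char b1 x = 0}
      \<times> {x \<in> carrier dihedral8. dihedral8_char b2 x = 0}"
    using commuting_fibre_subset_char_kernels b1(1) b2(1) H_card by blast
  then show ?thesis
    using b1 b2 by (auto simp: kernel_def Z2_def)
qed

theorem proposition4p2: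
  fixes l1 l2 :: "int \<times> int \<Rightarrow> int"
  defines "D \<equiv> dihedral8" and "Z2 \<equiv> integer_mod_group 2" and "P \<equiv> fibre_prod dihedral8 l1 l2"
  assumes "l1 \<in> hom D Z2" and "l2 \<in> hom D Z2"
    and "D\<lparr>carrier := kernel D Z2 l1\<rparr> \<cong> DirProd Z2 Z2"
    and "D\<lparr>carrier := kernel D Z2 l2\<rparr> \<cong> DirProd Z2 Z2"
  shows "(\<exists>!H. subgroup H P \<and> card H = 16 \<and> comm_group (P\<lparr>carrier := H\<rparr>))
    \<and> (\<forall>H. subgroup H P \<and> card H = 16 \<and> comm_group (P\<lparr>carrier := H\<rparr>) \<longrightarrow>
          H = kernel D Z2 l1 \<times> kernel D Z2 l2
          \<and> P\<lparr>carrier := H\<rparr> \<cong> DirProd Z2 (DirProd Z2 (DirProd Z2 Z2)))"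
proof -
  let ?K = "kernel D Z2 l1 \<times> kernel D Z2 l2"
  have groups: "group D" "group Z2"
    by (simp_all add: D_def Z2_def group_dihedral8)
  have K_iso: "P\<lparr>carrier := ?K\<rparr> \<cong> Z2 \<times>\<times> (Z2 \<times>\<times> (Z2 \<times>\<times> Z2))"
    using fibre_prod_kernels_iso[OF groups assms(4,6,7)] is_isoI[OF DirProd_assoc_iso]
    unfolding P_def D_def by (rule iso_trans)
  have K_subgroup: "subgroup ?K P"
    using kernels_subgroup_fibre_prod[OF groups assms(4,5)] by (simp add: P_def D_def)
  have K_card: "card ?K = 16"
    using iso_same_card[OF K_iso] by (simp add: Z2_def carrier_integer_mod_group card_cartesian_product)
  have K_comm: "comm_group (P\<lparr>carrier := ?K\<rparr>)"
  proof -
    have "group (P\<lparr>carrier := ?K\<rparr>)"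
      using subgroup.subgroup_is_group[OF K_subgroup] group_fibre_prod[OF groups assms(4,5)]
      by (simp add: P_def D_def)
    then show ?thesis
      using comm_group.iso_imp_comm_group[OF _ group.iso_sym[OF _ K_iso]]
      by (simp add: Z2_def comm_group_DirProd group.is_monoid)
  qed
  have K_unique: "H = ?K" if "subgroup H P" "card H = 16" "comm_group (P\<lparr>carrier := H\<rparr>)" for H
  proof (rule card_subset_eq)
    show "finite ?K"
      using K_card card.infinite by fastforce
    show "H \<subseteq> ?K"
      using abelian_subgroup_fibre_prod_dihedral8_subset_kernels[OF assms(4-7)[unfolded D_def Z2_def]]
        that unfolding D_def Z2_def P_def by simp
    show "card H = card ?K"
      using K_card that(2) by simp
  qed
  show ?thesis
    using K_subgroup K_card K_comm K_iso K_unique by blast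
qed

end
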